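(* Let $\beta=(\beta_1,\dots,\beta_k)$ be a weak composition. Let $n_1<n_2<\dots<n_k$ be positive integers, and set $n_0=0$. Then $$n_1^{\beta_1}n_2^{\beta_2}\cdots n_k^{\beta_k}=\sum_{I=(i_1,\dots,i_k)}c_{\beta,I}\binom{n_1-1}{i_1}\binom{n_2-n_1-1}{i_2}\cdots\binom{n_k-n_{k-1}-1}{i_k}.$$ The sum runs over all $I\in\mathbb N^k$ with $\sum_{t=j}^k i_t\le\sum_{t=j}^k\beta_t$ for $j=1,\dots,k$, and $\binom{m}{n}=0$ if $m<n$.
   Context: $\mathbb N$ denotes the nonnegative integers, and $[n]=\{1,\dots,n\}$ (empty if $n=0$). Filtered pointed Stirling numbers. For $\beta\in\mathbb N^k$ put $b_j=\beta_1+\dots+\beta_j$, $b_0=0$. For $I=(i_1,\dots,i_k)\in\mathbb N^k$ put $N_j=(i_1+1)+\dots+(i_j+1)$, $N_0=0$. Then $c_{\beta,I}$ is the number of maps $f:[b_k]\to[N_k]$ such that: - $f([b_j])\subseteq[N_j]$ for all $j=1,\dots,k$, and - $f([b_k])\cup\{N_1,\dots,N_k\}=[N_k]$. When $\beta=0^k$, only the empty map exists, so $c_{0^k,0^k}=1$. Equivalently, for any $n_1<\dots<n_k$ and subsets $Y_j\subseteq[n_{j-1}+1,n_j-1]$ with $|Y_j|=i_j$, $c_{\beta,I}$ is the number of maps $f:[b_k]\to[n_k]$ with $f([b_j])\subseteq[n_j]$ for all $j$ and $f([b_k])\cap[n_{j-1}+1,n_j-1]=Y_j$ for all $j$. For $k=1$,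 $c_{(m),(i)}=i!\,S(m+1,i+1)$ with $S$ the Stirling numbers of the second kind. *)

theory Defs
  imports Main "HOL-Library.FuncSet"
begin

text \<open>Compositions/index vectors are lists of length k; position j (0-based) is
  the paper's index j+1.  b_j = beta_1+...+beta_j, N_j = (i_1+1)+...+(i_j+1).\<close>

definition bpart :: "nat list \<Rightarrow> nat \<Rightarrow> nat" where
  "bpart beta j = sum_list (take j beta)"

definition Npart :: "nat list \<Rightarrow> nat \<Rightarrow> nat" where
  "Npart I j = sum_list (map Suc (take j I))"

definition cstir :: "nat list \<Rightarrow> nat list \<Rightarrow> nat" where
  "cstir beta I = (let k = length beta in
     card {f \<in> {1..bpart beta k} \<rightarrow>\<^sub>E {1..Npart I k}.
             (\<forall>j\<in>{1..k}. f ` {1..bpart beta j} \<subseteq> {1..Npart I j}) \<and>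
             f ` {1..bpart beta k} \<union> {Npart I j | j. j \<in> {1..k}} = {1..Npart I k}})"

end

theory Submission
  imports Defs
begin

(* Give the last block of beta one more element b+1.  Its image is either a point that is
   already covered (N_k choices), or a new point y inside the gap between the marks N_(t-1)
   and N_t; deleting y and renumbering gives a map counted by c_(beta, I - e_t), and that gap
   has i_t points.  Hence
     c_(beta + e_k, I) = N_k c_(beta, I) + sum_t i_t c_(beta, I - e_t),
   while an empty last block forces i_k = 0.  In the binomially weighted sum over the box
   i_t <= d_t = n_t - n_(t-1) - 1, the absorption identity (i+1) C(d, i+1) = (d - i) C(d, i)
   turns the second term into sum_t (d_t - i_t) c_(beta, I), and N_k + sum_t (d_t - i_t) = n_k,
   so the weighted sum gets multiplied by n_k: by induction it is the product of the
   n_j^beta_j.  The same recurrence shows that c_(beta, I) vanishes unless the suffix sums of I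
   are bounded by those of beta, and the binomials vanish outside the box, so both index sets
   give the same sum. *)

section \<open>Filtered pointed maps\<close>

lemma PiE_iff_image_subset: "f \<in> A \<rightarrow>\<^sub>E B \<longleftrightarrow> f \<in> extensional A \<and> f ` A \<subseteq> B"
  by (auto simp: PiE_iff)

text \<open>The set counted by \<^const>\<open>cstir\<close>, with an arbitrary filtration \<open>B\<close> and arbitrary marks \<open>L\<close>
  in place of \<open>bpart\<close> and \<open>Npart\<close>, so that deleting an unmarked point stays inside the family.\<close>

definition pointed_maps :: "(nat \<Rightarrow> nat) \<Rightarrow> (nat \<Rightarrow> nat) \<Rightarrow> nat \<Rightarrow> nat \<Rightarrow> nat \<Rightarrow> (nat \<Rightarrow> nat) set" where
  "pointed_maps B L k b N = {f \<in> {1..b} \<rightarrow>\<^sub>E {1..N}.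
     (\<forall>j\<in>{1..k}. f ` {1..B j} \<subseteq> {1..L j}) \<and> f ` {1..b} \<union> L ` {1..k} = {1..N}}"

lemma finite_pointed_maps: "finite (pointed_maps B L k b N)"
  unfolding pointed_maps_def by (rule finite_subset[OF _ finite_PiE[of "{1..b}" "\<lambda>_. {1..N}"]]) auto

lemma extensional_pointed_maps: "g \<in> pointed_maps B L k b N \<Longrightarrow> g \<in> extensional {1..b}"
  by (simp add: pointed_maps_def PiE_iff_image_subset)

lemma pointed_maps_cong:
  assumes "\<And>j. j \<in> {1..k} \<Longrightarrow> L j = L' j"
  shows "pointed_maps B L k b N = pointed_maps B L' k b N"
proof -
  have "L ` {1..k} = L' ` {1..k}" using assms by (rule image_cong[OF refl])
  with assms show ?thesis unfolding pointed_maps_def by auto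
qed

lemma pointed_maps_top_cong:
  assumes "\<forall>j\<in>{1..<k}. B j = B' j" "B k \<le> b" "B' k \<le> b" "L k = N"
  shows "pointed_maps B L k b N = pointed_maps B' L k b N"
proof -
  have "f ` {1..B j} \<subseteq> {1..L j} \<longleftrightarrow> f ` {1..B' j} \<subseteq> {1..L j}"
    if f: "f \<in> {1..b} \<rightarrow>\<^sub>E {1..N}" and j: "j \<in> {1..k}" for f j
  proof (cases "j = k")
    case True
    have "f ` {1..c} \<subseteq> {1..N}" if "c \<le> b" for c
      using f that by (auto simp: PiE_iff)
    with True assms(2-4) show ?thesis by simp
  next
    case False
    with j assms(1) show ?thesis by simp
  qed
  then show ?thesis unfolding pointed_maps_def
    by (intro Collect_cong conj_cong[OF refl] conj_cong[OF _ refl] ball_cong[OF refl]) auto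
qed

lemma pointed_maps_Suc_iff:
  assumes B: "\<forall>j\<in>{1..k}. B j \<le> b" and g: "g \<in> extensional {1..b}"
  shows "g(Suc b := v) \<in> pointed_maps B L k (Suc b) N \<longleftrightarrow>
    v \<in> {1..N} \<and> g ` {1..b} \<subseteq> {1..N} \<and> (\<forall>j\<in>{1..k}. g ` {1..B j} \<subseteq> {1..L j}) \<and>
    insert v (g ` {1..b} \<union> L ` {1..k}) = {1..N}"
proof -
  have "g(Suc b := v) ` {1..B j} = g ` {1..B j}" if "j \<in> {1..k}" for j
  proof -
    have "B j \<le> b" using B that by blast
    then show ?thesis by (intro image_cong) auto
  qed
  moreover have "g(Suc b := v) ` {1..Suc b} = insert v (g ` {1..b})"
    by (auto simp: atLeastAtMostSuc_conv)
  moreover have "g(Suc b := v) \<in> extensional {1..Suc b}"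
    using g by (auto simp: extensional_def)
  ultimately show ?thesis
    unfolding pointed_maps_def PiE_iff_image_subset by simp
qed

lemma pointed_maps_Suc_covered_eq_image:
  assumes B: "\<forall>j\<in>{1..k}. B j \<le> b"
  shows "{f \<in> pointed_maps B L k (Suc b) N. f (Suc b) \<in> f ` {1..b} \<union> L ` {1..k}} =
    (\<lambda>(g, v). g(Suc b := v)) ` (pointed_maps B L k b N \<times> {1..N})"
proof (intro equalityI subsetI)
  fix f assume f: "f \<in> {f \<in> pointed_maps B L k (Suc b) N. f (Suc b) \<in> f ` {1..b} \<union> L ` {1..k}}"
  define g where "g = f(Suc b := undefined)"
  have f_eq: "f = g(Suc b := f (Suc b))" by (simp add: g_def)
  have g_ext: "g \<in> extensional {1..b}"
    using f by (auto simp: g_def pointed_maps_def PiE_def extensional_def)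
  have g_img: "g ` {1..b} = f ` {1..b}" by (auto simp: g_def)
  from f have v: "f (Suc b) \<in> {1..N}" and range: "g ` {1..b} \<subseteq> {1..N}"
    and filt: "\<forall>j\<in>{1..k}. g ` {1..B j} \<subseteq> {1..L j}"
    and "insert (f (Suc b)) (g ` {1..b} \<union> L ` {1..k}) = {1..N}"
    using pointed_maps_Suc_iff[OF B g_ext, of "f (Suc b)" L N] f_eq by auto
  with f g_img have "g ` {1..b} \<union> L ` {1..k} = {1..N}" by (simp add: insert_absorb)
  with range filt g_ext have "g \<in> pointed_maps B L k b N"
    by (simp add: pointed_maps_def PiE_iff_image_subset)
  with v show "f \<in> (\<lambda>(g, v). g(Suc b := v)) ` (pointed_maps B L k b N \<times> {1..N})"
    using f_eq by (auto intro!: image_eqI[where x = "(g, f (Suc b))"])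
next
  fix f assume "f \<in> (\<lambda>(g, v). g(Suc b := v)) ` (pointed_maps B L k b N \<times> {1..N})"
  then obtain g v where f: "f = g(Suc b := v)" and g: "g \<in> pointed_maps B L k b N"
    and v: "v \<in> {1..N}"
    by auto
  from g have "g ` {1..b} \<subseteq> {1..N}" "\<forall>j\<in>{1..k}. g ` {1..B j} \<subseteq> {1..L j}"
    and cover: "g ` {1..b} \<union> L ` {1..k} = {1..N}"
    by (auto simp: pointed_maps_def PiE_iff_image_subset)
  with v have "f \<in> pointed_maps B L k (Suc b) N"
    unfolding f by (simp add: pointed_maps_Suc_iff[OF B extensional_pointed_maps[OF g]] insert_absorb)
  moreover have "f ` {1..b} = g ` {1..b}" by (auto simp: f)
  moreover have "f (Suc b) \<in> g ` {1..b} \<union> L ` {1..k}"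
    unfolding cover using v by (simp add: f)
  ultimately show "f \<in> {f \<in> pointed_maps B L k (Suc b) N. f (Suc b) \<in> f ` {1..b} \<union> L ` {1..k}}"
    by blast
qed

lemma card_pointed_maps_Suc_covered:
  assumes "\<forall>j\<in>{1..k}. B j \<le> b"
  shows "card {f \<in> pointed_maps B L k (Suc b) N. f (Suc b) \<in> f ` {1..b} \<union> L ` {1..k}} =
    N * card (pointed_maps B L k b N)"
proof -
  have "inj_on (\<lambda>(g, v). g(Suc b := v)) (pointed_maps B L k b N \<times> {1..N})"
  proof (rule inj_onI, clarify)
    fix g v g' v' assume "g \<in> pointed_maps B L k b N" "g' \<in> pointed_maps B L k b N"
      and eq: "g(Suc b := v) = g'(Suc b := v')"
    then have "g (Suc b) = undefined" "g' (Suc b) = undefined"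
      by (auto simp: extensional_def dest!: extensional_pointed_maps)
    then show "g = g' \<and> v = v'" using eq by (metis fun_upd_idem fun_upd_upd fun_upd_same)
  qed
  then show ?thesis
    unfolding pointed_maps_Suc_covered_eq_image[OF assms]
    by (simp add: card_image card_cartesian_product)
qed

definition shift_down :: "nat \<Rightarrow> nat \<Rightarrow> nat" where
  "shift_down y x = (if x < y then x else x - 1)"

definition shift_up :: "nat \<Rightarrow> nat \<Rightarrow> nat" where
  "shift_up y x = (if x < y then x else Suc x)"

lemma shift_down_shift_up [simp]: "shift_down y (shift_up y x) = x"
  by (simp add: shift_down_def shift_up_def)

lemma shift_up_shift_down: "x \<noteq> y \<Longrightarrow> shift_up y (shift_down y x) = x"
  by (auto simp: shift_down_def shift_up_def)

lemma shift_up_neq [simp]: "shift_up y x \<noteq> y"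
  by (simp add: shift_up_def)

lemma inj_shift_up: "inj (shift_up y)"
  by (metis injI shift_down_shift_up)

lemma insert_shift_up_image_eq_iff:
  "insert y (shift_up y ` A) = insert y (shift_up y ` B) \<longleftrightarrow> A = B"
proof -
  have "y \<notin> shift_up y ` S" for S by (metis imageE shift_up_neq)
  then show ?thesis by (simp add: insert_ident inj_image_eq_iff[OF inj_shift_up])
qed

lemma shift_up_image_atLeastAtMost:
  assumes "1 \<le> y" "M \<noteq> y"
  shows "shift_up y ` {1..shift_down y M} = {1..M} - {y}"
proof (intro equalityI subsetI)
  fix x assume x: "x \<in> {1..M} - {y}"
  then have "shift_down y x \<in> {1..shift_down y M}"
    using assms by (auto simp: shift_down_def)
  moreover have "x = shift_up y (shift_down y x)"
    using x by (simp add: shift_up_shift_down)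
  ultimately show "x \<in> shift_up y ` {1..shift_down y M}" by blast
qed (use assms in \<open>auto simp: shift_down_def shift_up_def split: if_splits\<close>)

lemma shift_up_image_subset_iff:
  assumes "1 \<le> y" "M \<noteq> y"
  shows "shift_up y ` S \<subseteq> {1..M} \<longleftrightarrow> S \<subseteq> {1..shift_down y M}"
proof -
  have "shift_up y ` S \<subseteq> {1..M} \<longleftrightarrow> shift_up y ` S \<subseteq> {1..M} - {y}" by auto
  also have "\<dots> \<longleftrightarrow> S \<subseteq> {1..shift_down y M}"
    using inj_image_subset_iff[OF inj_shift_up]
    by (simp only: shift_up_image_atLeastAtMost[OF assms, symmetric])
  finally show ?thesis .
qed

lemma pointed_maps_Suc_new_value_iff:
  assumes B: "\<forall>j\<in>{1..k}. B j \<le> b" and y: "1 \<le> y" "y < N" "y \<notin> L ` {1..k}"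
    and g: "g \<in> extensional {1..b}"
  shows "(restrict (shift_up y \<circ> g) {1..b})(Suc b := y) \<in> pointed_maps B L k (Suc b) N \<longleftrightarrow>
    g \<in> pointed_maps B (shift_down y \<circ> L) k b (N - 1)"
proof -
  let ?h = "restrict (shift_up y \<circ> g) {1..b}"
  have h_img: "?h ` {1..c} = shift_up y ` g ` {1..c}" if "c \<le> b" for c
    using that by (auto simp: image_comp)
  have L: "L j \<noteq> y" "L j = shift_up y (shift_down y (L j))" if "j \<in> {1..k}" for j
  proof -
    show "L j \<noteq> y" using y(3) that by blast
    then show "L j = shift_up y (shift_down y (L j))" by (simp add: shift_up_shift_down)
  qed
  have N: "N \<noteq> y" "shift_down y N = N - 1" using y by (auto simp: shift_down_def)
  have range: "?h ` {1..b} \<subseteq> {1..N} \<longleftrightarrow> g ` {1..b} \<subseteq> {1..N - 1}"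
    unfolding h_img[OF order_refl] shift_up_image_subset_iff[OF y(1) N(1)] N(2) ..
  have filt: "(\<forall>j\<in>{1..k}. ?h ` {1..B j} \<subseteq> {1..L j}) \<longleftrightarrow>
      (\<forall>j\<in>{1..k}. g ` {1..B j} \<subseteq> {1..(shift_down y \<circ> L) j})"
  proof (rule ball_cong[OF refl])
    fix j assume j: "j \<in> {1..k}"
    then have Bj: "B j \<le> b" using B by blast
    show "?h ` {1..B j} \<subseteq> {1..L j} \<longleftrightarrow> g ` {1..B j} \<subseteq> {1..(shift_down y \<circ> L) j}"
      unfolding h_img[OF Bj] shift_up_image_subset_iff[OF y(1) L(1)[OF j]] by simp
  qed
  have L_img: "L ` {1..k} = shift_up y ` (shift_down y \<circ> L) ` {1..k}"
    using L(2) by (auto simp: image_comp intro!: image_cong)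
  have "insert y (?h ` {1..b} \<union> L ` {1..k}) =
      insert y (shift_up y ` (g ` {1..b} \<union> (shift_down y \<circ> L) ` {1..k}))"
    unfolding h_img[OF order_refl] image_Un L_img ..
  moreover have "{1..N} = insert y (shift_up y ` {1..N - 1})"
    using shift_up_image_atLeastAtMost[OF y(1) N(1)] y by (auto simp: N(2))
  ultimately have cover: "insert y (?h ` {1..b} \<union> L ` {1..k}) = {1..N} \<longleftrightarrow>
      g ` {1..b} \<union> (shift_down y \<circ> L) ` {1..k} = {1..N - 1}"
    by (simp only: insert_shift_up_image_eq_iff)
  have h_ext: "?h \<in> extensional {1..b}" by simp
  show ?thesis
    using y g unfolding pointed_maps_Suc_iff[OF B h_ext] range filt cover
    by (simp add: pointed_maps_def PiE_iff_image_subset)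
qed

lemma pointed_maps_Suc_new_value_eq_image:
  assumes B: "\<forall>j\<in>{1..k}. B j \<le> b" and y: "1 \<le> y" "y < N" "y \<notin> L ` {1..k}"
  shows "{f \<in> pointed_maps B L k (Suc b) N. f (Suc b) = y \<and> y \<notin> f ` {1..b}} =
    (\<lambda>g. (restrict (shift_up y \<circ> g) {1..b})(Suc b := y)) ` pointed_maps B (shift_down y \<circ> L) k b (N - 1)"
    (is "?A = ?e ` ?P")
proof (intro equalityI subsetI)
  fix f assume f: "f \<in> ?A"
  define g where "g = restrict (shift_down y \<circ> f) {1..b}"
  have "f z = ?e g z" for z
  proof -
    consider "z \<in> {1..b}" | "z = Suc b" | "z \<notin> {1..Suc b}" by force
    then show ?thesis
    proof cases
      case 1
      then have "f z \<noteq> y" using f by blast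
      with 1 show ?thesis by (simp add: g_def shift_up_shift_down)
    next
      case 2
      then show ?thesis using f by simp
    next
      case 3
      then show ?thesis using f by (auto simp: pointed_maps_def PiE_def extensional_def)
    qed
  qed
  then have "f = ?e g" ..
  moreover have "g \<in> ?P"
  proof -
    have "?e g \<in> pointed_maps B L k (Suc b) N" using f \<open>f = ?e g\<close> by simp
    moreover have "g \<in> extensional {1..b}" by (simp add: g_def)
    ultimately show ?thesis using pointed_maps_Suc_new_value_iff[OF B y] by blast
  qed
  ultimately show "f \<in> ?e ` ?P" by blast
next
  fix f assume "f \<in> ?e ` ?P"
  then obtain g where f: "f = ?e g" and g: "g \<in> ?P" by blast
  have "y \<notin> f ` {1..b}" by (auto simp: f dest: sym)
  with g show "f \<in> ?A"
    using pointed_maps_Suc_new_value_iff[OF B y extensional_pointed_maps[OF g]] by (simp add: f)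
qed

lemma card_pointed_maps_Suc_new_value:
  assumes "\<forall>j\<in>{1..k}. B j \<le> b" "1 \<le> y" "y < N" "y \<notin> L ` {1..k}"
  shows "card {f \<in> pointed_maps B L k (Suc b) N. f (Suc b) = y \<and> y \<notin> f ` {1..b}} =
    card (pointed_maps B (shift_down y \<circ> L) k b (N - 1))"
proof -
  let ?e = "\<lambda>g. (restrict (shift_up y \<circ> g) {1..b})(Suc b := y)"
  let ?P = "pointed_maps B (shift_down y \<circ> L) k b (N - 1)"
  have "inj_on ?e ?P"
  proof (rule inj_onI)
    fix g g' assume g: "g \<in> ?P" and g': "g' \<in> ?P" and eq: "?e g = ?e g'"
    have "g z = g' z" if "z \<in> {1..b}" for z
      using fun_cong[OF eq, of z] that inj_shift_up[of y] by (simp add: inj_eq)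
    then show "g = g'"
      using extensional_pointed_maps[OF g] extensional_pointed_maps[OF g']
      by (rule extensionalityI[rotated 2]) blast
  qed
  then show ?thesis
    unfolding pointed_maps_Suc_new_value_eq_image[OF assms] by (rule card_image)
qed

lemma card_pointed_maps_Suc:
  assumes B: "\<forall>j\<in>{1..k}. B j \<le> b" and N: "N \<in> L ` {1..k}"
  shows "card (pointed_maps B L k (Suc b) N) = N * card (pointed_maps B L k b N) +
    (\<Sum>y\<in>{1..N} - L ` {1..k}. card (pointed_maps B (shift_down y \<circ> L) k b (N - 1)))"
proof -
  let ?P = "pointed_maps B L k (Suc b) N"
  let ?old = "{f \<in> ?P. f (Suc b) \<in> f ` {1..b} \<union> L ` {1..k}}"
  let ?new = "\<lambda>y. {f \<in> ?P. f (Suc b) = y \<and> y \<notin> f ` {1..b}}"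
  have "f (Suc b) \<in> {1..N}" if "f \<in> ?P" for f
    using that by (auto simp: pointed_maps_def)
  then have P: "?P = ?old \<union> (\<Union>y\<in>{1..N} - L ` {1..k}. ?new y)" by blast
  have "card ?P = card ?old + card (\<Union>y\<in>{1..N} - L ` {1..k}. ?new y)"
    by (subst P, rule card_Un_disjoint) (auto intro: finite_subset[OF _ finite_pointed_maps])
  also have "card (\<Union>y\<in>{1..N} - L ` {1..k}. ?new y) = (\<Sum>y\<in>{1..N} - L ` {1..k}. card (?new y))"
    by (rule card_UN_disjoint) (auto intro: finite_subset[OF _ finite_pointed_maps])
  also have "\<dots> = (\<Sum>y\<in>{1..N} - L ` {1..k}. card (pointed_maps B (shift_down y \<circ> L) k b (N - 1)))"
  proof (rule sum.cong[OF refl])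
    fix y assume "y \<in> {1..N} - L ` {1..k}"
    moreover from this have "y \<noteq> N" using N by blast
    ultimately show "card (?new y) = card (pointed_maps B (shift_down y \<circ> L) k b (N - 1))"
      by (intro card_pointed_maps_Suc_new_value[OF B]) auto
  qed
  finally show ?thesis by (simp only: card_pointed_maps_Suc_covered[OF B])
qed

section \<open>Recurrences for the filtered pointed Stirling numbers\<close>

lemma sum_list_map_take: "j \<le> length xs \<Longrightarrow> sum_list (map f (take j xs)) = (\<Sum>s<j. f (xs ! s))"
  by (induction j) (auto simp: take_Suc_conv_app_nth)

lemma Npart_eq_sum: "j \<le> length I \<Longrightarrow> Npart I j = (\<Sum>s<j. Suc (I ! s))"
  unfolding Npart_def by (rule sum_list_map_take)

lemma bpart_eq_sum: "j \<le> length \<beta> \<Longrightarrow> bpart \<beta> j = (\<Sum>s<j. \<beta> ! s)"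
  unfolding bpart_def using sum_list_map_take[of j \<beta> id] by simp

lemma Npart_0 [simp]: "Npart I 0 = 0"
  by (simp add: Npart_def)

lemma Npart_Suc: "t < length I \<Longrightarrow> Npart I (Suc t) = Npart I t + Suc (I ! t)"
  by (simp add: Npart_eq_sum)

lemma Npart_mono: "i \<le> j \<Longrightarrow> j \<le> length I \<Longrightarrow> Npart I i \<le> Npart I j"
  by (simp add: Npart_eq_sum sum_mono2)

lemma bpart_mono: "i \<le> j \<Longrightarrow> j \<le> length \<beta> \<Longrightarrow> bpart \<beta> i \<le> bpart \<beta> j"
  by (simp add: bpart_eq_sum sum_mono2)

lemma Npart_append: "j \<le> length I \<Longrightarrow> Npart (I @ I') j = Npart I j"
  by (simp add: Npart_def)

lemma bpart_append: "j \<le> length \<beta> \<Longrightarrow> bpart (\<beta> @ \<beta>') j = bpart \<beta> j"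
  by (simp add: bpart_def)

lemma bpart_snoc_length: "bpart (\<beta> @ [m]) (Suc (length \<beta>)) = bpart \<beta> (length \<beta>) + m"
  by (simp add: bpart_def)

(* Both sides are shifted so that no truncated subtraction occurs. *)
lemma Npart_list_update:
  assumes "t < length I" "j \<le> length I"
  shows "Npart (I[t := v]) j + (if t < j then I ! t else 0) = Npart I j + (if t < j then v else 0)"
  using assms(2)
proof (induction j)
  case (Suc j)
  then have "Npart (I[t := v]) (Suc j) = Npart (I[t := v]) j + Suc (I[t := v] ! j)"
    "Npart I (Suc j) = Npart I j + Suc (I ! j)"
    by (simp_all add: Npart_Suc)
  moreover have "I[t := v] ! j = (if t = j then v else I ! j)" using Suc by simp
  ultimately show ?case using Suc assms(1) by (auto split: if_splits)
qed simp

lemma Npart_image_subset: "Npart I ` {1..length I} \<subseteq> {1..Npart I (length I)}"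
proof
  fix x assume "x \<in> Npart I ` {1..length I}"
  then obtain j where j: "1 \<le> j" "j \<le> length I" "x = Npart I j" by auto
  have "(\<Sum>s<j. 1) \<le> (\<Sum>s<j. Suc (I ! s))" by (rule sum_mono) simp
  then have "j \<le> Npart I j" using j by (simp add: Npart_eq_sum)
  moreover have "Npart I j \<le> Npart I (length I)" using j Npart_mono[of j "length I" I] by simp
  ultimately show "x \<in> {1..Npart I (length I)}" using j by simp
qed

lemma cstir_eq_card_pointed_maps:
  "cstir \<beta> I = card (pointed_maps (bpart \<beta>) (Npart I) (length \<beta>)
     (bpart \<beta> (length \<beta>)) (Npart I (length \<beta>)))"
proof -
  have "{Npart I j |j. j \<in> {1..length \<beta>}} = Npart I ` {1..length \<beta>}" by blast
  then show ?thesis unfolding cstir_def pointed_maps_def Let_def by (simp only:)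
qed

lemma cstir_Nil: "cstir [] [] = 1"
proof -
  have "{f \<in> {1..0::nat} \<rightarrow>\<^sub>E {1..0::nat}. True} = {\<lambda>_. undefined}" by auto
  then show ?thesis by (simp add: cstir_def bpart_def Npart_def)
qed

lemma exists_crossing_index:
  fixes a :: "nat \<Rightarrow> nat"
  assumes "a 0 < y" "y \<le> a k"
  shows "\<exists>t<k. a t < y \<and> y \<le> a (Suc t)"
  using assms(2)
proof (induction k)
  case (Suc k)
  then show ?case by (cases "y \<le> a k") (auto intro: less_SucI)
qed (use assms(1) in simp)

lemma Npart_gaps:
  "{1..Npart I (length I)} - Npart I ` {1..length I} = (\<Union>t<length I. {Npart I t<..<Npart I (Suc t)})"
proof (intro equalityI subsetI)
  fix y assume y: "y \<in> {1..Npart I (length I)} - Npart I ` {1..length I}"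
  then obtain t where t: "t < length I" "Npart I t < y" "y \<le> Npart I (Suc t)"
    using exists_crossing_index[of "Npart I" y "length I"] by auto
  moreover have "y \<noteq> Npart I (Suc t)" using y t(1) by auto
  ultimately show "y \<in> (\<Union>t<length I. {Npart I t<..<Npart I (Suc t)})" by auto
next
  fix y assume "y \<in> (\<Union>t<length I. {Npart I t<..<Npart I (Suc t)})"
  then obtain t where t: "t < length I" "Npart I t < y" "y < Npart I (Suc t)" by auto
  have "y \<le> Npart I (length I)" using t Npart_mono[of "Suc t" "length I" I] by simp
  moreover have "y \<notin> Npart I ` {1..length I}"
  proof
    assume "y \<in> Npart I ` {1..length I}"
    then obtain j where "j \<le> length I" "y = Npart I j" by auto
    then show False using t Npart_mono[of j t I] Npart_mono[of "Suc t" j I] by (cases "j \<le> t") auto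
  qed
  ultimately show "y \<in> {1..Npart I (length I)} - Npart I ` {1..length I}" using t by auto
qed

lemma sum_Npart_gaps:
  "(\<Sum>y\<in>{1..Npart I (length I)} - Npart I ` {1..length I}. F y) =
    (\<Sum>t<length I. \<Sum>y\<in>{Npart I t<..<Npart I (Suc t)}. F y)"
proof -
  have "{Npart I t<..<Npart I (Suc t)} \<inter> {Npart I t'<..<Npart I (Suc t')} = {}"
    if "t < t'" "t' < length I" for t t'
    using that Npart_mono[of "Suc t" t' I] by auto
  then have "\<forall>t\<in>{..<length I}. \<forall>t'\<in>{..<length I}. t \<noteq> t' \<longrightarrow>
      {Npart I t<..<Npart I (Suc t)} \<inter> {Npart I t'<..<Npart I (Suc t')} = {}"
    by (metis Int_commute lessThan_iff linorder_neqE_nat)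
  then show ?thesis unfolding Npart_gaps by (subst sum.UNION_disjoint) auto
qed

lemma shift_down_Npart:
  assumes t: "t < length I" and y: "y \<in> {Npart I t<..<Npart I (Suc t)}" and j: "j \<le> length I"
  shows "shift_down y (Npart I j) = Npart (I[t := I ! t - 1]) j"
proof (cases "j \<le> t")
  case True
  then have "Npart I j < y" using Npart_mono[of j t I] t y by auto
  then show ?thesis using Npart_list_update[OF t j, of "I ! t - 1"] True by (simp add: shift_down_def)
next
  case False
  then have "y < Npart I j" using Npart_mono[of "Suc t" j I] j y by auto
  moreover have "I ! t \<ge> 1" using y Npart_Suc[OF t] by auto
  ultimately show ?thesis using Npart_list_update[OF t j, of "I ! t - 1"] False by (simp add: shift_down_def)
qed

lemma card_pointed_maps_delete_gap_point:
  assumes len: "length I = length \<beta>" and t: "t < length I"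
    and y: "y \<in> {Npart I t<..<Npart I (Suc t)}"
  shows "card (pointed_maps (bpart \<beta>) (shift_down y \<circ> Npart I) (length \<beta>) (bpart \<beta> (length \<beta>))
      (Npart I (length \<beta>) - 1)) = cstir \<beta> (I[t := I ! t - 1])"
proof -
  let ?I' = "I[t := I ! t - 1]"
  have shifted: "shift_down y (Npart I j) = Npart ?I' j" if "j \<le> length \<beta>" for j
    using shift_down_Npart[OF t y] that len by simp
  have "Npart I (length \<beta>) - 1 = shift_down y (Npart I (length \<beta>))"
    using y Npart_mono[of "Suc t" "length \<beta>" I] t len by (auto simp: shift_down_def)
  also have "\<dots> = Npart ?I' (length \<beta>)" using shifted by simp
  finally have N: "Npart I (length \<beta>) - 1 = Npart ?I' (length \<beta>)" .
  have "pointed_maps (bpart \<beta>) (shift_down y \<circ> Npart I) (length \<beta>) (bpart \<beta> (length \<beta>))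
      (Npart I (length \<beta>) - 1) =
    pointed_maps (bpart \<beta>) (Npart ?I') (length \<beta>) (bpart \<beta> (length \<beta>)) (Npart I (length \<beta>) - 1)"
    by (rule pointed_maps_cong) (simp add: shifted)
  then show ?thesis unfolding N by (simp add: cstir_eq_card_pointed_maps)
qed

lemma cstir_snoc_Suc:
  assumes len: "length I = Suc (length bs)"
  shows "cstir (bs @ [Suc m]) I = Npart I (length I) * cstir (bs @ [m]) I +
    (\<Sum>t<length I. I ! t * cstir (bs @ [m]) (I[t := I ! t - 1]))"
proof -
  define k where "k = length I"
  define \<beta> where "\<beta> = bs @ [m]"
  define b where "b = bpart \<beta> k"
  define N where "N = Npart I k"
  have len_\<beta>: "length \<beta> = k" "length (bs @ [Suc m]) = k" using len by (simp_all add: k_def \<beta>_def)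
  have B: "\<forall>j\<in>{1..k}. bpart \<beta> j \<le> b" using len_\<beta> by (auto simp: b_def intro: bpart_mono)
  have N: "N \<in> Npart I ` {1..k}" using len by (simp add: k_def N_def)
  have removed: "card (pointed_maps (bpart \<beta>) (shift_down y \<circ> Npart I) k b (N - 1)) =
      cstir \<beta> (I[t := I ! t - 1])" if "t < k" "y \<in> {Npart I t<..<Npart I (Suc t)}" for t y
    using card_pointed_maps_delete_gap_point[of I \<beta> t y] that len_\<beta> by (simp add: k_def b_def N_def)
  have b_Suc: "bpart (bs @ [Suc m]) k = Suc b"
    using len bpart_snoc_length[of bs m] bpart_snoc_length[of bs "Suc m"]
    by (simp add: k_def b_def \<beta>_def)
  have "pointed_maps (bpart (bs @ [Suc m])) (Npart I) k (Suc b) N =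
      pointed_maps (bpart \<beta>) (Npart I) k (Suc b) N"
  proof (rule pointed_maps_top_cong)
    show "\<forall>j\<in>{1..<k}. bpart (bs @ [Suc m]) j = bpart \<beta> j"
      using len by (auto simp: \<beta>_def k_def bpart_append)
  qed (simp_all add: b_Suc b_def N_def)
  then have "cstir (bs @ [Suc m]) I = card (pointed_maps (bpart \<beta>) (Npart I) k (Suc b) N)"
    using len_\<beta> b_Suc by (simp add: cstir_eq_card_pointed_maps N_def)
  also have "\<dots> = N * cstir \<beta> I +
      (\<Sum>y\<in>{1..N} - Npart I ` {1..k}. card (pointed_maps (bpart \<beta>) (shift_down y \<circ> Npart I) k b (N - 1)))"
    using card_pointed_maps_Suc[OF B N] len_\<beta> by (simp add: cstir_eq_card_pointed_maps b_def N_def)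
  also have "\<dots> = N * cstir \<beta> I + (\<Sum>t<k. \<Sum>y\<in>{Npart I t<..<Npart I (Suc t)}. cstir \<beta> (I[t := I ! t - 1]))"
    unfolding N_def k_def sum_Npart_gaps using removed by (simp add: k_def N_def)
  also have "\<dots> = N * cstir \<beta> I + (\<Sum>t<k. I ! t * cstir \<beta> (I[t := I ! t - 1]))"
    by (simp add: Npart_Suc k_def)
  finally show ?thesis by (simp add: k_def N_def \<beta>_def)
qed

lemma insert_top_eq_atLeastAtMost_iff:
  fixes N i :: nat
  assumes "A \<subseteq> {1..N}"
  shows "insert (N + Suc i) A = {1..N + Suc i} \<longleftrightarrow> i = 0 \<and> A = {1..N}"
proof
  assume eq: "insert (N + Suc i) A = {1..N + Suc i}"
  have "Suc N \<in> insert (N + Suc i) A" unfolding eq by simp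
  moreover have "Suc N \<notin> A" using assms by auto
  ultimately have "i = 0" by simp
  moreover from this have "A = {1..N + Suc i} - {N + Suc i}"
    using eq assms by auto
  ultimately show "i = 0 \<and> A = {1..N}" by auto
qed auto

lemma image_le_Npart_length:
  assumes "\<forall>j\<in>{1..length \<beta>}. f ` {1..bpart \<beta> j} \<subseteq> {1..Npart I j}"
  shows "f ` {1..bpart \<beta> (length \<beta>)} \<subseteq> {1..Npart I (length \<beta>)}"
proof (cases "length \<beta> = 0")
  case False
  then show ?thesis using assms by (simp add: Suc_le_eq)
qed (simp add: bpart_def)

lemma mem_pointed_maps_snoc_0_iff:
  assumes len: "length I = length bs"
  defines "k \<equiv> length bs" and "b \<equiv> bpart bs (length bs)" and "N \<equiv> Npart I (length bs)"
  shows "f \<in> pointed_maps (bpart (bs @ [0])) (Npart (I @ [i])) (Suc k) b (N + Suc i) \<longleftrightarrow>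
    i = 0 \<and> f \<in> pointed_maps (bpart bs) (Npart I) k b N"
proof -
  have top: "bpart (bs @ [0]) (Suc k) = b" "Npart (I @ [i]) (Suc k) = N + Suc i"
    using len bpart_snoc_length[of bs 0] by (simp_all add: k_def b_def N_def Npart_def)
  have low: "bpart (bs @ [0]) j = bpart bs j" "Npart (I @ [i]) j = Npart I j" if "j \<le> k" for j
    using that len by (simp_all add: k_def bpart_append Npart_append)
  have "Npart (I @ [i]) ` {1..k} = Npart I ` {1..k}"
    by (rule image_cong) (simp_all add: low)
  then have marks: "Npart (I @ [i]) ` {1..Suc k} = insert (N + Suc i) (Npart I ` {1..k})"
    by (simp add: atLeastAtMostSuc_conv top)
  have "(\<forall>j\<in>{1..k}. f ` {1..bpart (bs @ [0]) j} \<subseteq> {1..Npart (I @ [i]) j}) \<longleftrightarrow>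
      (\<forall>j\<in>{1..k}. f ` {1..bpart bs j} \<subseteq> {1..Npart I j})"
    by (rule ball_cong) (simp_all add: low)
  then have filt: "(\<forall>j\<in>{1..Suc k}. f ` {1..bpart (bs @ [0]) j} \<subseteq> {1..Npart (I @ [i]) j}) \<longleftrightarrow>
      f ` {1..b} \<subseteq> {1..N + Suc i} \<and> (\<forall>j\<in>{1..k}. f ` {1..bpart bs j} \<subseteq> {1..Npart I j})"
    by (simp add: atLeastAtMostSuc_conv top)
  show ?thesis
  proof (cases "\<forall>j\<in>{1..k}. f ` {1..bpart bs j} \<subseteq> {1..Npart I j}")
    case True
    then have "f ` {1..b} \<subseteq> {1..N}"
      using image_le_Npart_length[of bs f I] by (simp add: b_def N_def k_def)
    then have pie: "f \<in> {1..b} \<rightarrow>\<^sub>E {1..N + Suc i} \<longleftrightarrow> f \<in> {1..b} \<rightarrow>\<^sub>E {1..N}"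
      and range: "f ` {1..b} \<subseteq> {1..N + Suc i}"
      by (auto simp: PiE_iff_image_subset)
    have "Npart I ` {1..k} \<subseteq> {1..N}"
      using Npart_image_subset[of I] len by (simp add: k_def N_def)
    with \<open>f ` {1..b} \<subseteq> {1..N}\<close>
    have cover: "f ` {1..b} \<union> insert (N + Suc i) (Npart I ` {1..k}) = {1..N + Suc i} \<longleftrightarrow>
        i = 0 \<and> f ` {1..b} \<union> Npart I ` {1..k} = {1..N}"
      unfolding Un_insert_right by (intro insert_top_eq_atLeastAtMost_iff) simp
    show ?thesis
      unfolding pointed_maps_def filt marks mem_Collect_eq pie cover using True range by argo
  next
    case False
    then show ?thesis unfolding pointed_maps_def filt mem_Collect_eq by argo
  qed
qed

lemma cstir_snoc_0:
  assumes len: "length I = length bs"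
  shows "cstir (bs @ [0]) (I @ [i]) = (if i = 0 then cstir bs I else 0)"
proof -
  have "pointed_maps (bpart (bs @ [0])) (Npart (I @ [i])) (Suc (length bs)) (bpart bs (length bs))
      (Npart I (length bs) + Suc i) =
    (if i = 0 then pointed_maps (bpart bs) (Npart I) (length bs) (bpart bs (length bs)) (Npart I (length bs))
     else {})"
    unfolding set_eq_iff mem_pointed_maps_snoc_0_iff[OF len] by simp
  moreover have "bpart (bs @ [0]) (Suc (length bs)) = bpart bs (length bs)"
    using bpart_snoc_length[of bs 0] by simp
  moreover have "Npart (I @ [i]) (Suc (length bs)) = Npart I (length bs) + Suc i"
    using len by (simp add: Npart_def)
  ultimately show ?thesis by (simp add: cstir_eq_card_pointed_maps)
qed

section \<open>Vanishing outside the suffix-dominated range\<close>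

definition suffix_dominated :: "nat list \<Rightarrow> nat list \<Rightarrow> bool" where
  "suffix_dominated I \<beta> \<longleftrightarrow>
     length I = length \<beta> \<and> (\<forall>j<length \<beta>. sum_list (drop j I) \<le> sum_list (drop j \<beta>))"

lemma finite_suffix_dominated: "finite {I. suffix_dominated I \<beta>}"
proof (rule finite_subset)
  show "{I. suffix_dominated I \<beta>} \<subseteq> {I. set I \<subseteq> {0..sum_list \<beta>} \<and> length I = length \<beta>}"
  proof
    fix I assume I: "I \<in> {I. suffix_dominated I \<beta>}"
    have "x \<le> sum_list \<beta>" if x: "x \<in> set I" for x
    proof -
      have "\<beta> \<noteq> []" using I x by (auto simp: suffix_dominated_def)
      with I have "sum_list I \<le> sum_list \<beta>" by (auto simp: suffix_dominated_def dest: spec[of _ 0])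
      moreover have "x \<le> sum_list I" using x by (simp add: member_le_sum_list)
      ultimately show ?thesis by simp
    qed
    then show "I \<in> {I. set I \<subseteq> {0..sum_list \<beta>} \<and> length I = length \<beta>}"
      using I by (auto simp: suffix_dominated_def)
  qed
qed (rule finite_lists_length_eq, simp)

lemma sum_list_drop_le_decrement:
  fixes xs :: "nat list"
  assumes t: "t < length xs"
  shows "sum_list (drop j xs) \<le> sum_list (drop j (xs[t := xs ! t - 1])) + 1"
proof (cases "t < j")
  case True
  then show ?thesis by (simp add: drop_update_cancel)
next
  case False
  define ys where "ys = drop j xs"
  have t': "t - j < length ys" and ys_t: "ys ! (t - j) = xs ! t"
    using t False by (simp_all add: ys_def)
  have "drop j (xs[t := xs ! t - 1]) = ys[t - j := xs ! t - 1]"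
    using False by (simp add: drop_update_swap ys_def)
  moreover have "sum_list (ys[t - j := xs ! t - 1]) = sum_list ys + (xs ! t - 1) - ys ! (t - j)"
    using t' by (rule sum_list_update)
  moreover have "ys ! (t - j) \<le> sum_list ys" using t' by (rule elem_le_sum_list)
  ultimately show ?thesis using ys_t by (simp add: ys_def[symmetric])
qed

lemma not_suffix_dominated_snoc_decrement:
  assumes not_dominated: "\<not> suffix_dominated I (bs @ [Suc m])" and len: "length J = length I"
    and le: "\<And>j. sum_list (drop j I) \<le> sum_list (drop j J) + 1"
  shows "\<not> suffix_dominated J (bs @ [m])"
proof
  assume dominated: "suffix_dominated J (bs @ [m])"
  obtain j where j: "j < Suc (length bs)" "sum_list (drop j (bs @ [Suc m])) < sum_list (drop j I)"
    using not_dominated dominated len by (auto simp: suffix_dominated_def not_le simp del: drop_append)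
  moreover have "sum_list (drop j J) \<le> sum_list (drop j (bs @ [m]))"
    using dominated j(1) by (simp add: suffix_dominated_def del: drop_append)
  ultimately show False using le[of j] by (simp add: drop_append)
qed

lemma cstir_snoc_eq_0_if_not_dominated:
  assumes IH: "\<And>I. length I = length bs \<Longrightarrow> \<not> suffix_dominated I bs \<Longrightarrow> cstir bs I = 0"
  shows "length I = Suc (length bs) \<Longrightarrow> \<not> suffix_dominated I (bs @ [m]) \<Longrightarrow>
    cstir (bs @ [m]) I = 0"
proof (induction m arbitrary: I)
  case 0
  obtain I' i where I: "I = I' @ [i]" using 0 by (metis length_Suc_conv_rev)
  have len: "length I' = length bs" using 0 I by simp
  show ?case
  proof (cases "i = 0")
    case True
    obtain j where j: "j < Suc (length bs)" "sum_list (drop j bs) < sum_list (drop j I)"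
      using 0 by (auto simp: suffix_dominated_def not_le)
    with I True len have "j \<noteq> length bs" by auto
    with j I True len have "j < length bs" "sum_list (drop j bs) < sum_list (drop j I')"
      by simp_all
    then have "\<not> suffix_dominated I' bs" by (auto simp: suffix_dominated_def)
    with IH len I True show ?thesis by (simp add: cstir_snoc_0)
  next
    case False
    with len I show ?thesis by (simp add: cstir_snoc_0)
  qed
next
  case (Suc m)
  have "\<not> suffix_dominated I (bs @ [m])"
    by (rule not_suffix_dominated_snoc_decrement[OF Suc.prems(2)]) simp_all
  moreover have "\<not> suffix_dominated (I[t := I ! t - 1]) (bs @ [m])" if "t < length I" for t
    using sum_list_drop_le_decrement[OF that]
    by (rule not_suffix_dominated_snoc_decrement[OF Suc.prems(2), rotated]) simp
  ultimately show ?case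
    using Suc.IH Suc.prems(1) cstir_snoc_Suc[OF Suc.prems(1), of m] by simp
qed

lemma cstir_eq_0_if_not_dominated:
  "length I = length \<beta> \<Longrightarrow> \<not> suffix_dominated I \<beta> \<Longrightarrow> cstir \<beta> I = 0"
proof (induction \<beta> arbitrary: I rule: rev_induct)
  case (snoc m bs)
  then show ?case using cstir_snoc_eq_0_if_not_dominated[of bs I m] by simp
qed (simp add: suffix_dominated_def)

section \<open>Binomial weights of the gaps\<close>

definition gap :: "nat list \<Rightarrow> nat \<Rightarrow> nat" where
  "gap n j = n ! j - (if j = 0 then 0 else n ! (j - 1)) - 1"

definition gap_box :: "nat list \<Rightarrow> nat list set" where
  "gap_box n = {I. length I = length n \<and> (\<forall>j<length n. I ! j \<le> gap n j)}"

definition gap_binomial :: "nat list \<Rightarrow> nat list \<Rightarrow> nat" where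
  "gap_binomial n I = (\<Prod>j<length n. gap n j choose (I ! j))"

lemma finite_gap_box: "finite (gap_box n)"
proof (rule finite_subset)
  have "gap n j \<le> sum_list n" if "j < length n" for j
    using elem_le_sum_list[OF that] by (simp add: gap_def)
  then show "gap_box n \<subseteq> {I. set I \<subseteq> {0..sum_list n} \<and> length I = length n}"
    by (force simp: gap_box_def in_set_conv_nth)
qed (rule finite_lists_length_eq, simp)

lemma gap_binomial_eq_0: "length I = length n \<Longrightarrow> I \<notin> gap_box n \<Longrightarrow> gap_binomial n I = 0"
  by (auto simp: gap_box_def gap_binomial_def not_le intro: prod_zero)

lemma gap_snoc: "j < length n \<Longrightarrow> gap (n @ [z]) j = gap n j"
  by (simp add: gap_def nth_append)

lemma gap_binomial_snoc:
  "length I = length n \<Longrightarrow>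
    gap_binomial (n @ [z]) (I @ [i]) = gap_binomial n I * (gap (n @ [z]) (length n) choose i)"
  by (simp add: gap_binomial_def nth_append gap_snoc)

lemma gap_binomial_remove:
  "t < length n \<Longrightarrow>
    gap_binomial n I = (gap n t choose (I ! t)) * (\<Prod>j\<in>{..<length n} - {t}. gap n j choose (I ! j))"
  unfolding gap_binomial_def by (rule prod.remove) auto

lemma Suc_mult_binomial_Suc: "Suc k * (n choose Suc k) = (n - k) * (n choose k)"
  by (simp only: binomial_absorption binomial_absorb_comp)

lemma gap_binomial_increment:
  assumes t: "t < length n" and len: "length J = length n"
  shows "Suc (J ! t) * gap_binomial n (J[t := Suc (J ! t)]) = (gap n t - J ! t) * gap_binomial n J"
proof -
  have rest: "(\<Prod>j\<in>{..<length n} - {t}. gap n j choose (J[t := Suc (J ! t)] ! j)) =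
      (\<Prod>j\<in>{..<length n} - {t}. gap n j choose (J ! j))"
    by (intro prod.cong) auto
  have "Suc (J ! t) * gap_binomial n (J[t := Suc (J ! t)]) =
      (Suc (J ! t) * (gap n t choose Suc (J ! t))) * (\<Prod>j\<in>{..<length n} - {t}. gap n j choose (J ! j))"
    using t len by (simp add: gap_binomial_remove[OF t] rest del: mult_Suc)
  also have "\<dots> = (gap n t - J ! t) * gap_binomial n J"
    unfolding Suc_mult_binomial_Suc gap_binomial_remove[OF t, of J] by (rule mult.assoc)
  finally show ?thesis .
qed

lemma sum_gap_box_decrement:
  assumes t: "t < length n"
  shows "(\<Sum>I\<in>gap_box n. I ! t * g (I[t := I ! t - 1]) * gap_binomial n I) =
    (\<Sum>I\<in>gap_box n. (gap n t - I ! t) * g I * gap_binomial n I)"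
proof -
  let ?d = "gap n t"
  let ?inc = "\<lambda>J. J[t := Suc (J ! t)]"
  let ?dec = "\<lambda>I. I[t := I ! t - 1]"
  have "(\<Sum>I\<in>gap_box n. I ! t * g (?dec I) * gap_binomial n I) =
      (\<Sum>I\<in>gap_box n \<inter> {I. 1 \<le> I ! t}. I ! t * g (?dec I) * gap_binomial n I)"
    by (rule sum.mono_neutral_right) (auto simp: finite_gap_box)
  also have "\<dots> = (\<Sum>J\<in>gap_box n \<inter> {J. J ! t < ?d}. (?d - J ! t) * g J * gap_binomial n J)"
  proof (rule sum.reindex_bij_witness[where j = ?dec and i = ?inc])
    fix I assume I: "I \<in> gap_box n \<inter> {I. 1 \<le> I ! t}"
    then have len: "length I = length n" by (simp add: gap_box_def)
    show inc_dec: "?inc (?dec I) = I" using I t len by auto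
    show "?dec I \<in> gap_box n \<inter> {J. J ! t < ?d}"
      using I t len unfolding gap_box_def by (auto simp: nth_list_update)
    have dec_t: "Suc (?dec I ! t) = I ! t" using I t len by simp
    have "length (?dec I) = length n" using len by simp
    from gap_binomial_increment[OF t this, unfolded inc_dec, unfolded dec_t]
    show "(?d - ?dec I ! t) * g (?dec I) * gap_binomial n (?dec I) = I ! t * g (?dec I) * gap_binomial n I"
      by (metis mult.assoc mult.commute)
  next
    fix J assume J: "J \<in> gap_box n \<inter> {J. J ! t < ?d}"
    then have len: "length J = length n" by (simp add: gap_box_def)
    show "?dec (?inc J) = J" using t len by auto
    show "?inc J \<in> gap_box n \<inter> {I. 1 \<le> I ! t}"
      using J t len unfolding gap_box_def by (auto simp: nth_list_update)
  qed
  also have "\<dots> = (\<Sum>J\<in>gap_box n. (?d - J ! t) * g J * gap_binomial n J)"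
    by (rule sum.mono_neutral_left) (auto simp: finite_gap_box)
  finally show ?thesis .
qed

lemma sum_Suc_gap:
  assumes "sorted_wrt (<) n" "\<forall>x\<in>set n. 0 < x" "K < length n"
  shows "(\<Sum>t<Suc K. Suc (gap n t)) = n ! K"
  using assms(3)
proof (induction K)
  case 0
  then have "0 < n ! 0" using assms(2) by (simp add: nth_mem)
  then show ?case by (simp add: gap_def)
next
  case (Suc K)
  have "n ! K < n ! Suc K" using sorted_wrt_nth_less[OF assms(1)] Suc.prems by simp
  with Suc show ?case by (simp add: gap_def)
qed

lemma Npart_add_sum_gap_diff:
  assumes I: "I \<in> gap_box n" and n: "sorted_wrt (<) n" "\<forall>x\<in>set n. 0 < x" "n \<noteq> []"
  shows "Npart I (length n) + (\<Sum>t<length n. gap n t - I ! t) = last n"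
proof -
  have len: "length I = length n" and le: "\<forall>t<length n. I ! t \<le> gap n t"
    using I by (auto simp: gap_box_def)
  have "Npart I (length n) = (\<Sum>t<length n. Suc (I ! t))"
    using len by (simp add: Npart_eq_sum)
  then have "Npart I (length n) + (\<Sum>t<length n. gap n t - I ! t) =
      (\<Sum>t<length n. Suc (I ! t) + (gap n t - I ! t))"
    by (simp only: sum.distrib)
  also have "\<dots> = (\<Sum>t<Suc (length n - 1). Suc (gap n t))"
    using le n(3) by (intro sum.cong) auto
  also have "\<dots> = last n"
    using sum_Suc_gap[OF n(1,2), of "length n - 1"] n(3) by (simp add: last_conv_nth)
  finally show ?thesis .
qed

lemma sum_gap_box_snoc:
  "(\<Sum>I\<in>gap_box (n @ [z]). F I) = (\<Sum>I\<in>gap_box n. \<Sum>i\<le>gap (n @ [z]) (length n). F (I @ [i]))"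
proof -
  let ?D = "gap (n @ [z]) (length n)"
  have "(\<Sum>I\<in>gap_box n. \<Sum>i\<le>?D. F (I @ [i])) = (\<Sum>(I, i)\<in>gap_box n \<times> {..?D}. F (I @ [i]))"
    by (rule sum.cartesian_product)
  also have "\<dots> = (\<Sum>I\<in>gap_box (n @ [z]). F I)"
  proof (rule sum.reindex_bij_witness[where i = "\<lambda>I. (butlast I, last I)" and j = "\<lambda>(I, i). I @ [i]"])
    fix a assume "a \<in> gap_box n \<times> {..?D}"
    then show "(case a of (I, i) \<Rightarrow> I @ [i]) \<in> gap_box (n @ [z])"
      by (auto simp: gap_box_def nth_append gap_snoc less_Suc_eq)
  next
    fix I assume I: "I \<in> gap_box (n @ [z])"
    then have len: "length I = Suc (length n)" and le: "\<forall>j<Suc (length n). I ! j \<le> gap (n @ [z]) j"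
      by (simp_all add: gap_box_def)
    have "butlast I ! j \<le> gap n j" if "j < length n" for j
      using le[rule_format, of j] that len by (simp add: nth_butlast gap_snoc)
    moreover have "last I \<le> ?D"
      using le[rule_format, of "length n"] len last_conv_nth[of I] by force
    ultimately show "(butlast I, last I) \<in> gap_box n \<times> {..?D}"
      using len by (simp add: gap_box_def)
    have "I \<noteq> []" using len by auto
    then show "(case (butlast I, last I) of (I, i) \<Rightarrow> I @ [i]) = I" by simp
  qed auto
  finally show ?thesis by simp
qed

lemma sum_gap_box_cstir_snoc_0:
  assumes len: "length n = length bs"
  shows "(\<Sum>I\<in>gap_box (n @ [z]). cstir (bs @ [0]) I * gap_binomial (n @ [z]) I) =
    (\<Sum>I\<in>gap_box n. cstir bs I * gap_binomial n I)"
  unfolding sum_gap_box_snoc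
proof (rule sum.cong[OF refl])
  fix I assume "I \<in> gap_box n"
  then have "length I = length bs" using len by (simp add: gap_box_def)
  then have "(\<Sum>i\<le>gap (n @ [z]) (length n). cstir (bs @ [0]) (I @ [i]) * gap_binomial (n @ [z]) (I @ [i])) =
      (\<Sum>i\<le>gap (n @ [z]) (length n). if i = 0 then cstir bs I * gap_binomial n I else 0)"
    using len by (intro sum.cong) (simp_all add: cstir_snoc_0 gap_binomial_snoc)
  also have "\<dots> = cstir bs I * gap_binomial n I" by simp
  finally show "(\<Sum>i\<le>gap (n @ [z]) (length n). cstir (bs @ [0]) (I @ [i]) * gap_binomial (n @ [z]) (I @ [i])) =
      cstir bs I * gap_binomial n I" .
qed

lemma sum_gap_box_cstir_snoc_Suc:
  assumes len: "length n = Suc (length bs)" and n: "sorted_wrt (<) n" "\<forall>x\<in>set n. 0 < x"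
  shows "(\<Sum>I\<in>gap_box n. cstir (bs @ [Suc m]) I * gap_binomial n I) =
    last n * (\<Sum>I\<in>gap_box n. cstir (bs @ [m]) I * gap_binomial n I)"
proof -
  let ?c = "cstir (bs @ [m])"
  let ?W = "gap_binomial n"
  let ?K = "length n"
  have "(\<Sum>I\<in>gap_box n. cstir (bs @ [Suc m]) I * ?W I) =
      (\<Sum>I\<in>gap_box n. Npart I ?K * ?c I * ?W I + (\<Sum>t<?K. I ! t * ?c (I[t := I ! t - 1]) * ?W I))"
  proof (rule sum.cong[OF refl])
    fix I assume "I \<in> gap_box n"
    then have "length I = Suc (length bs)" "length I = ?K" using len by (simp_all add: gap_box_def)
    then show "cstir (bs @ [Suc m]) I * ?W I =
        Npart I ?K * ?c I * ?W I + (\<Sum>t<?K. I ! t * ?c (I[t := I ! t - 1]) * ?W I)"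
      by (simp add: cstir_snoc_Suc distrib_right sum_distrib_right)
  qed
  also have "\<dots> = (\<Sum>I\<in>gap_box n. Npart I ?K * ?c I * ?W I) +
      (\<Sum>t<?K. \<Sum>I\<in>gap_box n. I ! t * ?c (I[t := I ! t - 1]) * ?W I)"
    by (simp add: sum.distrib sum.swap[of _ "{..<?K}"])
  also have "\<dots> = (\<Sum>I\<in>gap_box n. Npart I ?K * ?c I * ?W I) +
      (\<Sum>t<?K. \<Sum>I\<in>gap_box n. (gap n t - I ! t) * ?c I * ?W I)"
    by (intro arg_cong2[where f = "(+)"] sum.cong refl sum_gap_box_decrement) simp
  also have "\<dots> = (\<Sum>I\<in>gap_box n. Npart I ?K * ?c I * ?W I + (\<Sum>t<?K. (gap n t - I ! t) * ?c I * ?W I))"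
    by (subst sum.swap) (rule sum.distrib[symmetric])
  also have "\<dots> = (\<Sum>I\<in>gap_box n. (Npart I ?K + (\<Sum>t<?K. gap n t - I ! t)) * ?c I * ?W I)"
    by (simp only: distrib_right sum_distrib_right)
  also have "\<dots> = (\<Sum>I\<in>gap_box n. last n * ?c I * ?W I)"
  proof (rule sum.cong[OF refl])
    fix I assume I: "I \<in> gap_box n"
    have "n \<noteq> []" using len by auto
    from Npart_add_sum_gap_diff[OF I n this]
    show "(Npart I ?K + (\<Sum>t<?K. gap n t - I ! t)) * ?c I * ?W I = last n * ?c I * ?W I"
      by (rule arg_cong[where f = "\<lambda>x. x * ?c I * ?W I"])
  qed
  finally show ?thesis by (simp add: sum_distrib_left mult.assoc)
qed

lemma prod_power_eq_sum_gap_box: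
  "length n = length \<beta> \<Longrightarrow> sorted_wrt (<) n \<Longrightarrow> \<forall>x\<in>set n. 0 < x \<Longrightarrow>
    (\<Prod>j<length \<beta>. (n ! j) ^ (\<beta> ! j)) = (\<Sum>I\<in>gap_box n. cstir \<beta> I * gap_binomial n I)"
proof (induction \<beta> arbitrary: n rule: rev_induct)
  case Nil
  then have "gap_box n = {[]}" by (auto simp: gap_box_def)
  then show ?case using Nil by (simp add: gap_binomial_def cstir_Nil)
next
  case (snoc x bs)
  obtain n' z where n: "n = n' @ [z]"
    using snoc.prems(1) by (metis length_Suc_conv_rev length_append_singleton)
  have len: "length n' = length bs" using snoc.prems(1) n by simp
  have IH: "(\<Prod>j<length bs. (n' ! j) ^ (bs ! j)) = (\<Sum>I\<in>gap_box n'. cstir bs I * gap_binomial n' I)"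
    using snoc.IH[OF len] snoc.prems(2,3) n by (simp add: sorted_wrt_append)
  let ?A = "\<Prod>j<length bs. (n' ! j) ^ (bs ! j)"
  have prod_snoc: "(\<Prod>j<length (bs @ [m]). (n ! j) ^ ((bs @ [m]) ! j)) = ?A * z ^ m" for m
    using len by (simp add: n nth_append)
  have "?A * z ^ m = (\<Sum>I\<in>gap_box n. cstir (bs @ [m]) I * gap_binomial n I)" for m
  proof (induction m)
    case 0
    show ?case unfolding n sum_gap_box_cstir_snoc_0[OF len] IH by simp
  next
    case (Suc m)
    have "?A * z ^ Suc m = z * (\<Sum>I\<in>gap_box n. cstir (bs @ [m]) I * gap_binomial n I)"
      by (simp flip: Suc.IH)
    also have "\<dots> = (\<Sum>I\<in>gap_box n. cstir (bs @ [Suc m]) I * gap_binomial n I)"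
      using sum_gap_box_cstir_snoc_Suc[of n bs m] snoc.prems by (simp add: n)
    finally show ?case .
  qed
  then show ?case by (simp only: prod_snoc)
qed

theorem lemma5p3:
  fixes beta n :: "nat list"
  assumes "length n = length beta"
    and "sorted_wrt (<) n"
    and "\<forall>x\<in>set n. 0 < x"
  shows "(\<Prod>j<length beta. (n ! j) ^ (beta ! j)) =
    (\<Sum>I\<in>{I. length I = length beta \<and>
              (\<forall>j<length beta. sum_list (drop j I) \<le> sum_list (drop j beta))}.
       cstir beta I *
       (\<Prod>j<length beta. (n ! j - (if j = 0 then 0 else n ! (j - 1)) - 1) choose (I ! j)))"
proof -
  let ?D = "{I. suffix_dominated I beta}"
  have weight: "(\<Prod>j<length beta. (n ! j - (if j = 0 then 0 else n ! (j - 1)) - 1) choose (I ! j)) =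
      gap_binomial n I" for I
    using assms(1) by (simp add: gap_binomial_def gap_def)
  have "(\<Sum>I\<in>?D. cstir beta I * gap_binomial n I) = (\<Sum>I\<in>gap_box n. cstir beta I * gap_binomial n I)"
  proof (rule sum.same_carrierI[where C = "?D \<union> gap_box n"])
    show "cstir beta I * gap_binomial n I = 0" if "I \<in> ?D \<union> gap_box n - gap_box n" for I
      using that assms(1) by (auto simp: suffix_dominated_def gap_binomial_eq_0)
    show "cstir beta I * gap_binomial n I = 0" if "I \<in> ?D \<union> gap_box n - ?D" for I
      using that assms(1) by (auto simp: gap_box_def cstir_eq_0_if_not_dominated)
  qed (auto simp: finite_suffix_dominated finite_gap_box)
  then show ?thesis
    unfolding weight using prod_power_eq_sum_gap_box[OF assms] by (simp add: suffix_dominated_def)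
qed

end
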